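(* Let $(A_j)_{j\ge1}$ be a sequence of nonempty subsets of $\mathbb{Z}$ such that there is a positive integer $q$ with $A_j\subset A_{j+q}$ for all $j$, and such that $\sup_j|A_j|<\infty$. If there exists a sequence $(U_j)_{j\ge1}$ of subsets of $\mathbb{Z}$ with $A_j+U_j=A_{j+q}$ for all $j$, then $(A_j)_{j\ge1}$ is strongly eventually periodic.
   Context: For $B,C\subset\mathbb{Z}$, $B+C=\{b+c:b\in B,c\in C\}$. A sequence $(A_j)_{j\ge1}$ of nonempty subsets of $\mathbb{Z}$ is strongly eventually periodic (SEP) if there exist a positive integer $p$ and finite sequences of sets $(B_\ell)_{\ell=1}^p$, $(C_\ell)_{\ell=1}^p$ such that $(A_j)$ equals $B_1,\ldots,B_p$ followed by the infinite repetition of $B_1+C_1,\ldots,B_p+C_p$. *)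

theory Defs
  imports Main
begin

definition sumset :: "int set \<Rightarrow> int set \<Rightarrow> int set" where
  "sumset B C = {x. \<exists>b\<in>B. \<exists>c\<in>C. x = b + c}"

text \<open>Sequences (A_j) for j >= 1 are modelled as functions nat => int set; only indices j >= 1
  matter.\<close>
definition SEP :: "(nat \<Rightarrow> int set) \<Rightarrow> bool" where
  "SEP A \<longleftrightarrow> (\<exists>p::nat. p > 0 \<and> (\<exists>B C :: nat \<Rightarrow> int set.
      (\<forall>l\<in>{1..p}. A l = B l) \<and>
      (\<forall>k::nat. \<forall>l\<in>{1..p}. A (p + k * p + l) = sumset (B l) (C l))))"

end

theory Submission
  imports Defs
begin

text \<open>Along each residue class modulo \<open>q\<close> the sets \<open>A\<^sub>j \<subseteq> A\<^sub>j\<^sub>+\<^sub>q \<subseteq> \<dots>\<close> form an increasing chain of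
  finite sets of bounded size, so it becomes constant; as there are only \<open>q\<close> residue classes,
  all chains are constant from one common index \<open>K\<close> on.  Hence \<open>A\<close> is periodic with period
  \<open>p = (K + 1) q\<close> from index \<open>p + 1\<close> on, and iterating \<open>A\<^sub>j + U\<^sub>j = A\<^sub>j\<^sub>+\<^sub>q\<close> writes each
  \<open>A\<^sub>l\<^sub>+\<^sub>p\<close> as \<open>A\<^sub>l + (U\<^sub>l + U\<^sub>l\<^sub>+\<^sub>q + \<dots> + U\<^sub>l\<^sub>+\<^sub>K\<^sub>q)\<close>.\<close>

lemma sumset_assoc: "sumset (sumset X Y) Z = sumset X (sumset Y Z)"
  unfolding sumset_def by (auto, metis add.assoc, metis add.assoc)

lemma sumset_zero_right [simp]: "sumset X {0} = X"
  unfolding sumset_def by auto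

fun iterated_sumset :: "(nat \<Rightarrow> int set) \<Rightarrow> nat \<Rightarrow> nat \<Rightarrow> nat \<Rightarrow> int set" where
  "iterated_sumset U q l 0 = {0}"
| "iterated_sumset U q l (Suc m) = sumset (iterated_sumset U q l m) (U (l + m * q))"

lemma sumset_iterated_sumset:
  assumes step: "\<forall>j\<ge>1. sumset (A j) (U j) = A (j + q)" and "l \<ge> 1"
  shows "sumset (A l) (iterated_sumset U q l m) = A (l + m * q)"
proof (induction m)
  case 0
  show ?case by simp
next
  case (Suc m)
  have "sumset (A l) (iterated_sumset U q l (Suc m))
      = sumset (A (l + m * q)) (U (l + m * q))"
    using Suc by (simp flip: sumset_assoc)
  also have "\<dots> = A (l + Suc m * q)"
    using step \<open>l \<ge> 1\<close> by (simp add: algebra_simps)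
  finally show ?case .
qed

lemma mono_card_bounded_eventually_const:
  fixes f :: "nat \<Rightarrow> 'a set"
  assumes "mono f" and fin: "\<And>m. finite (f m)" and bounded: "\<And>m. card (f m) \<le> M"
  shows "\<forall>\<^sub>F K in sequentially. \<forall>m\<ge>K. f m = f K"
proof -
  have fin_cards: "finite (range (card \<circ> f))"
    by (rule finite_subset[of _ "{..M}"]) (use bounded in auto)
  obtain m0 where m0: "card (f m0) = Max (range (card \<circ> f))"
    using Max_in[OF fin_cards] by auto
  have const: "f m = f m0" if "m0 \<le> m" for m
  proof (rule card_seteq[symmetric])
    show "f m0 \<subseteq> f m" using \<open>mono f\<close> that by (rule monoD)
    show "card (f m) \<le> card (f m0)"
      unfolding m0 by (rule Max_ge[OF fin_cards]) simp
  qed (rule fin)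
  show ?thesis
    unfolding eventually_sequentially
  proof (intro exI allI impI)
    fix K m assume "m0 \<le> K" "K \<le> m"
    then show "f m = f K" using const[of m] const[of K] by simp
  qed
qed

lemma residue_decomposition:
  fixes l q :: nat
  assumes "l \<ge> 1" and "q > 0"
  obtains j t where "j \<in> {1..q}" and "l = j + t * q"
proof
  show "(l - 1) mod q + 1 \<in> {1..q}"
    using \<open>q > 0\<close> by (simp add: Suc_le_eq)
  show "l = ((l - 1) mod q + 1) + ((l - 1) div q) * q"
    using \<open>l \<ge> 1\<close> div_mult_mod_eq[of "l - 1" q] by linarith
qed

lemma residue_chains_stabilize:
  fixes A :: "nat \<Rightarrow> 'a set" and q :: nat
  assumes "q > 0"
    and incl: "\<forall>j\<ge>1. A j \<subseteq> A (j + q)"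
    and bounded: "\<forall>j\<ge>1. finite (A j) \<and> card (A j) \<le> M"
  obtains K where "\<And>l n. l \<ge> 1 \<Longrightarrow> n \<ge> K \<Longrightarrow> A (l + n * q) = A (l + K * q)"
proof -
  have "\<forall>\<^sub>F K in sequentially. \<forall>m\<ge>K. A (j + m * q) = A (j + K * q)" if "j \<ge> 1" for j
  proof (rule mono_card_bounded_eventually_const[where M = M])
    show "mono (\<lambda>m. A (j + m * q))"
      unfolding mono_iff_le_Suc
    proof
      fix n
      have "A (j + n * q) \<subseteq> A (j + n * q + q)" using incl \<open>j \<ge> 1\<close> by simp
      then show "A (j + n * q) \<subseteq> A (j + Suc n * q)" by (simp add: ac_simps)
    qed
  qed (use bounded \<open>j \<ge> 1\<close> in auto)
  then have "\<forall>\<^sub>F K in sequentially. \<forall>j\<in>{1..q}. \<forall>m\<ge>K. A (j + m * q) = A (j + K * q)"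
    by (intro eventually_ball_finite) auto
  then obtain K where K: "\<And>j m. j \<in> {1..q} \<Longrightarrow> m \<ge> K \<Longrightarrow> A (j + m * q) = A (j + K * q)"
    unfolding eventually_sequentially by blast
  have "A (l + n * q) = A (l + K * q)" if "l \<ge> 1" "n \<ge> K" for l n
  proof -
    obtain j t where j: "j \<in> {1..q}" and l: "l = j + t * q"
      using residue_decomposition \<open>l \<ge> 1\<close> \<open>q > 0\<close> by blast
    have "A (l + n * q) = A (j + K * q)" using K[OF j, of "t + n"] l \<open>n \<ge> K\<close>
      by (simp add: algebra_simps)
    also have "\<dots> = A (l + K * q)" using K[OF j, of "t + K"] l
      by (simp add: algebra_simps)
    finally show ?thesis .
  qed
  then show ?thesis using that by blast
qed

theorem lemma5p10:
  fixes A :: "nat \<Rightarrow> int set" and q :: nat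
  assumes nonempty: "\<forall>j\<ge>1. A j \<noteq> {}"
    and q_pos: "q > 0"
    and incl: "\<forall>j\<ge>1. A j \<subseteq> A (j + q)"
    and bounded: "\<exists>M::nat. \<forall>j\<ge>1. finite (A j) \<and> card (A j) \<le> M"
    and U: "\<exists>U :: nat \<Rightarrow> int set. \<forall>j\<ge>1. sumset (A j) (U j) = A (j + q)"
  shows "SEP A"
proof -
  obtain U where step: "\<forall>j\<ge>1. sumset (A j) (U j) = A (j + q)" using U by blast
  obtain M where "\<forall>j\<ge>1. finite (A j) \<and> card (A j) \<le> M" using bounded by blast
  then obtain K where K: "\<And>l n. l \<ge> 1 \<Longrightarrow> n \<ge> K \<Longrightarrow> A (l + n * q) = A (l + K * q)"
    using residue_chains_stabilize[OF q_pos incl] by blast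
  define p where "p = (K + 1) * q"
  have periodic: "A (p + k * p + l) = sumset (A l) (iterated_sumset U q l (K + 1))"
    if "l \<in> {1..p}" for k l
  proof -
    have "l \<ge> 1" using that by simp
    have "A (p + k * p + l) = A (l + ((K + 1) * (k + 1)) * q)"
      unfolding p_def by (simp add: algebra_simps)
    also have "\<dots> = A (l + K * q)" by (rule K[OF \<open>l \<ge> 1\<close>]) simp
    also have "\<dots> = A (l + (K + 1) * q)" by (rule K[OF \<open>l \<ge> 1\<close>, symmetric]) simp
    also have "\<dots> = sumset (A l) (iterated_sumset U q l (K + 1))"
      by (rule sumset_iterated_sumset[OF step \<open>l \<ge> 1\<close>, symmetric])
    finally show ?thesis .
  qed
  show ?thesis
    unfolding SEP_def
  proof (intro exI conjI)
    show "p > 0" using q_pos by (simp add: p_def)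
    show "\<forall>l\<in>{1..p}. A l = A l" by simp
    show "\<forall>k. \<forall>l\<in>{1..p}. A (p + k * p + l) = sumset (A l) (iterated_sumset U q l (K + 1))"
      using periodic by blast
  qed
qed

end
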